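(* Let $G=(V,E)$ be a finite graph in which each edge carries one of the four decorations $(+,o),(+,s),(-,o),(-,s)$. Let $H$ be the $2$-cover of $G$ encoded by the signs, and decorate each edge of $H$ with the letter ($o$ or $s$) of the edge of $G$ it lies over. For $B\subseteq E$ let $\overline{B}$ denote the graph $(V,B)$ in which each edge with a $-$ sign has its letter swapped ($o\leftrightarrow s$) while edges with a $+$ sign keep their letter; for $A\subseteq E$ the graph $(V,A)$ keeps the original letters. Then the numbers of balanced factorientations satisfy $$g(H)=\sum_{A\subseteq E}g(A)\,g\big(\overline{E\setminus A}\big).$$
   Context: The $2$-cover encoded by the signs has vertex set $V\times\{0,1\}$; an edge $uv$ with sign $+$ lifts to the edges $(u,0)(v,0),(u,1)(v,1)$, and an edge with sign $-$ lifts to $(u,0)(v,1),(u,1)(v,0)$. Given a graph $F$ whose edges are each labelled $o$ or $s$, a factorientation consists of orienting every $o$-edge and deciding for every $s$-edge whether it is in a subgraph or not. The mixed degree of a vertex $v$ is the number of $o$-edges oriented towards $v$ plus the number of selected $s$-edges incident to $v$. The factorientation is balanced if every vertex $v$ has mixed degree $d_F(v)/2$, where $d_F(v)$ is the degree of $v$ in $F$. $g(F)$ denotes the number of balanced factorientations of $F$ (with its labels); $g(A)$ means $g$ of the labelled graph $(V,A)$. *)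

theory Defs
  imports Main
begin

text \<open>A labelled (multi)graph is given by a vertex set V, an edge set E of edge
identifiers, an endpoint map ends (each edge e joins fst (ends e) and snd (ends e);
the pair order is only a reference orientation), and a label map lab, where
lab e = True means letter o and lab e = False means letter s.\<close>

definition degree :: "'e set \<Rightarrow> ('e \<Rightarrow> 'v \<times> 'v) \<Rightarrow> 'v \<Rightarrow> nat" where
  "degree E ends v = card {e \<in> E. fst (ends e) = v \<or> snd (ends e) = v}"

text \<open>A factorientation is encoded by a subset X of E: an o-edge e is oriented
towards snd (ends e) if e is in X and towards fst (ends e) otherwise; an s-edge is
selected iff it is in X.\<close>

definition mixed_degree ::
  "'e set \<Rightarrow> ('e \<Rightarrow> 'v \<times> 'v) \<Rightarrow> ('e \<Rightarrow> bool) \<Rightarrow> 'e set \<Rightarrow> 'v \<Rightarrow> nat" where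
  "mixed_degree E ends lab X v =
     card {e \<in> E. lab e \<and> (if e \<in> X then snd (ends e) = v else fst (ends e) = v)}
   + card {e \<in> E. \<not> lab e \<and> e \<in> X \<and> (fst (ends e) = v \<or> snd (ends e) = v)}"

definition balanced_factorientation ::
  "'v set \<Rightarrow> 'e set \<Rightarrow> ('e \<Rightarrow> 'v \<times> 'v) \<Rightarrow> ('e \<Rightarrow> bool) \<Rightarrow> 'e set \<Rightarrow> bool" where
  "balanced_factorientation V E ends lab X \<longleftrightarrow>
     X \<subseteq> E \<and> (\<forall>v\<in>V. 2 * mixed_degree E ends lab X v = degree E ends v)"

definition gcount :: "'v set \<Rightarrow> 'e set \<Rightarrow> ('e \<Rightarrow> 'v \<times> 'v) \<Rightarrow> ('e \<Rightarrow> bool) \<Rightarrow> nat" where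
  "gcount V E ends lab = card {X. balanced_factorientation V E ends lab X}"

text \<open>The 2-cover encoded by the signs (sgnf e = True means +): vertex set V \<times> {0,1}
(with bool for {0,1}), edge set E \<times> {0,1}; the edge (e,b) joins (u,b),(w,b) if e = uw
has sign +, and (u,b),(w, not b) if e has sign -.\<close>
definition cover_ends :: "('e \<Rightarrow> 'v \<times> 'v) \<Rightarrow> ('e \<Rightarrow> bool) \<Rightarrow> 'e \<times> bool \<Rightarrow> ('v \<times> bool) \<times> ('v \<times> bool)" where
  "cover_ends ends sgnf eb =
     (case eb of (e, b) \<Rightarrow> ((fst (ends e), b), (snd (ends e), if sgnf e then b else \<not> b)))"

definition swap_lab :: "('e \<Rightarrow> bool) \<Rightarrow> ('e \<Rightarrow> bool) \<Rightarrow> 'e \<Rightarrow> bool" where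
  "swap_lab sgnf lab e = (if sgnf e then lab e else \<not> lab e)"

end

theory Submission
  imports Defs
begin

(* Split a factorientation X of the cover edge by edge according to whether the two lifts
   (e,0) and (e,1) of e are treated alike. On the set A of such edges the lifts act like two
   copies of one factorientation X1 of (V,A) and contribute equally above every vertex v. On
   the other edges the contributions at (v,0) are those of a factorientation X2 of the
   letter-swapped graph on E - A, and the contributions at (v,1) are complementary to them:
   together they count the edges of E - A at v. Hence X is balanced at (v,0) and (v,1) iff X1
   and X2 are balanced at v, and X corresponds bijectively to the triple (A, X1, X2). *)

definition edge_mixed_degree ::
  "('e \<Rightarrow> 'v \<times> 'v) \<Rightarrow> ('e \<Rightarrow> bool) \<Rightarrow> 'e set \<Rightarrow> 'e \<Rightarrow> 'v \<Rightarrow> nat" where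
  "edge_mixed_degree ends lab X e v =
     of_bool (lab e \<and> (if e \<in> X then snd (ends e) = v else fst (ends e) = v))
   + of_bool (\<not> lab e \<and> e \<in> X \<and> (fst (ends e) = v \<or> snd (ends e) = v))"

definition incidence :: "('e \<Rightarrow> 'v \<times> 'v) \<Rightarrow> 'e \<Rightarrow> 'v \<Rightarrow> nat" where
  "incidence ends e v = of_bool (fst (ends e) = v \<or> snd (ends e) = v)"

lemma mixed_degree_eq_sum:
  "finite E \<Longrightarrow> mixed_degree E ends lab X v = (\<Sum>e\<in>E. edge_mixed_degree ends lab X e v)"
  unfolding mixed_degree_def edge_mixed_degree_def sum.distrib
  by (simp add: Int_def)

lemma degree_eq_sum: "finite E \<Longrightarrow> degree E ends v = (\<Sum>e\<in>E. incidence ends e v)"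
  unfolding degree_def incidence_def
  by (subst sum_of_bool_eq) (simp_all add: Int_def)

lemma lifts_mixed_degree_agree:
  assumes "fst (ends e) \<noteq> snd (ends e)"
    and "(e, True) \<in> X \<longleftrightarrow> (e, False) \<in> X" and "e \<in> X1 \<longleftrightarrow> (e, False) \<in> X"
  shows "edge_mixed_degree (cover_ends ends sgnf) (lab \<circ> fst) X (e, False) (v, b)
       + edge_mixed_degree (cover_ends ends sgnf) (lab \<circ> fst) X (e, True) (v, b)
       = edge_mixed_degree ends lab X1 e v"
  using assms unfolding edge_mixed_degree_def cover_ends_def
  by (cases "sgnf e"; cases "lab e"; cases "(e, False) \<in> X"; cases b; auto)

lemma lifts_mixed_degree_disagree:
  assumes "fst (ends e) \<noteq> snd (ends e)"
    and "(e, True) \<in> X \<longleftrightarrow> (e, False) \<notin> X" and "e \<in> X2 \<longleftrightarrow> ((e, False) \<in> X \<longleftrightarrow> sgnf e)"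
  shows "edge_mixed_degree (cover_ends ends sgnf) (lab \<circ> fst) X (e, False) (v, False)
       + edge_mixed_degree (cover_ends ends sgnf) (lab \<circ> fst) X (e, True) (v, False)
       = edge_mixed_degree ends (swap_lab sgnf lab) X2 e v"
    and "edge_mixed_degree (cover_ends ends sgnf) (lab \<circ> fst) X (e, False) (v, True)
       + edge_mixed_degree (cover_ends ends sgnf) (lab \<circ> fst) X (e, True) (v, True)
       + edge_mixed_degree ends (swap_lab sgnf lab) X2 e v
       = incidence ends e v"
  using assms unfolding edge_mixed_degree_def cover_ends_def swap_lab_def incidence_def
  by (cases "sgnf e"; cases "lab e"; cases "(e, False) \<in> X"; auto)+

lemma lifts_incidence:
  assumes "fst (ends e) \<noteq> snd (ends e)"
  shows "incidence (cover_ends ends sgnf) (e, False) (v, b)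
       + incidence (cover_ends ends sgnf) (e, True) (v, b) = incidence ends e v"
  using assms unfolding cover_ends_def incidence_def
  by (cases "sgnf e"; cases b; auto)

lemma degree_split:
  assumes "finite E" and "A \<subseteq> E"
  shows "degree E ends v = degree A ends v + degree (E - A) ends v"
  using assms finite_subset[OF assms(2,1)]
  by (simp add: degree_eq_sum sum.subset_diff[OF assms(2,1)] add.commute)

lemma sum_Times_UNIV_bool:
  "(\<Sum>p\<in>E \<times> (UNIV :: bool set). f p) = (\<Sum>e\<in>E. f (e, False) + f (e, True))"
  by (simp add: sum.cartesian_product' UNIV_bool)

lemma degree_cover:
  assumes "finite E" and "\<forall>e\<in>E. fst (ends e) \<noteq> snd (ends e)"
  shows "degree (E \<times> UNIV) (cover_ends ends sgnf) (v, b) = degree E ends v"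
  using assms by (simp add: degree_eq_sum sum_Times_UNIV_bool lifts_incidence)

definition agreeing_edges :: "'e set \<Rightarrow> ('e \<times> bool) set \<Rightarrow> 'e set" where
  "agreeing_edges E X = {e \<in> E. (e, True) \<in> X \<longleftrightarrow> (e, False) \<in> X}"

definition cover_split ::
  "'e set \<Rightarrow> ('e \<Rightarrow> bool) \<Rightarrow> ('e \<times> bool) set \<Rightarrow> 'e set \<times> 'e set \<times> 'e set" where
  "cover_split E sgnf X =
     (let A = agreeing_edges E X
      in (A, {e \<in> A. (e, False) \<in> X}, {e \<in> E - A. (e, False) \<in> X \<longleftrightarrow> sgnf e}))"

definition cover_join ::
  "'e set \<Rightarrow> ('e \<Rightarrow> bool) \<Rightarrow> 'e set \<times> 'e set \<times> 'e set \<Rightarrow> ('e \<times> bool) set" where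
  "cover_join E sgnf =
     (\<lambda>(A, X1, X2). {(e, b). e \<in> E \<and>
        (if e \<in> A then e \<in> X1 else (e \<in> X2 \<longleftrightarrow> sgnf e) \<longleftrightarrow> \<not> b)})"

lemma cover_split_subsets:
  "cover_split E sgnf X = (A, X1, X2) \<Longrightarrow> A \<subseteq> E \<and> X1 \<subseteq> A \<and> X2 \<subseteq> E - A"
  by (auto simp: cover_split_def agreeing_edges_def Let_def)

lemma bij_betw_cover_split:
  "bij_betw (cover_split E sgnf) (Pow (E \<times> UNIV))
     {(A, X1, X2). A \<subseteq> E \<and> X1 \<subseteq> A \<and> X2 \<subseteq> E - A}"
proof (rule bij_betw_byWitness[where f' = "cover_join E sgnf"])
  show "\<forall>X\<in>Pow (E \<times> UNIV). cover_join E sgnf (cover_split E sgnf X) = X"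
    by (auto simp: cover_join_def cover_split_def agreeing_edges_def; metis (full_types))
  show "\<forall>t\<in>{(A, X1, X2). A \<subseteq> E \<and> X1 \<subseteq> A \<and> X2 \<subseteq> E - A}.
          cover_split E sgnf (cover_join E sgnf t) = t"
    by (auto simp: cover_join_def cover_split_def agreeing_edges_def)
  show "cover_split E sgnf ` Pow (E \<times> UNIV) \<subseteq> {(A, X1, X2). A \<subseteq> E \<and> X1 \<subseteq> A \<and> X2 \<subseteq> E - A}"
    by (auto simp: cover_split_def agreeing_edges_def)
  show "cover_join E sgnf ` {(A, X1, X2). A \<subseteq> E \<and> X1 \<subseteq> A \<and> X2 \<subseteq> E - A} \<subseteq> Pow (E \<times> UNIV)"
    by (auto simp: cover_join_def)
qed

lemma mixed_degree_cover:
  fixes ends :: "'e \<Rightarrow> 'v \<times> 'v"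
  assumes fin: "finite E" and loopless: "\<forall>e\<in>E. fst (ends e) \<noteq> snd (ends e)"
    and split: "cover_split E sgnf X = (A, X1, X2)"
  shows "mixed_degree (E \<times> UNIV) (cover_ends ends sgnf) (lab \<circ> fst) X (v, False)
         = mixed_degree A ends lab X1 v + mixed_degree (E - A) ends (swap_lab sgnf lab) X2 v"
    and "mixed_degree (E \<times> UNIV) (cover_ends ends sgnf) (lab \<circ> fst) X (v, True)
         + mixed_degree (E - A) ends (swap_lab sgnf lab) X2 v
         = mixed_degree A ends lab X1 v + degree (E - A) ends v"
proof -
  define lifts where "lifts b e =
    edge_mixed_degree (cover_ends ends sgnf) (lab \<circ> fst) X (e, False) (v, b)
    + edge_mixed_degree (cover_ends ends sgnf) (lab \<circ> fst) X (e, True) (v, b)" for b e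
  have A: "A = agreeing_edges E X"
    and X1: "X1 = {e \<in> A. (e, False) \<in> X}"
    and X2: "X2 = {e \<in> E - A. (e, False) \<in> X \<longleftrightarrow> sgnf e}"
    using split by (auto simp: cover_split_def Let_def)
  have AE: "A \<subseteq> E" and finA: "finite A"
    using A fin by (auto simp: agreeing_edges_def)
  have cover: "mixed_degree (E \<times> UNIV) (cover_ends ends sgnf) (lab \<circ> fst) X (v, b)
      = sum (lifts b) A + sum (lifts b) (E - A)" for b
    using fin by (simp add: mixed_degree_eq_sum sum_Times_UNIV_bool lifts_def
        sum.subset_diff[OF AE fin] add.commute)
  have agree: "sum (lifts b) A = mixed_degree A ends lab X1 v" for b
    unfolding mixed_degree_eq_sum[OF finA] lifts_def
    by (intro sum.cong refl lifts_mixed_degree_agree)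
      (use A X1 AE loopless in \<open>auto simp: agreeing_edges_def\<close>)
  have disagree: "e \<in> E - A \<Longrightarrow> (e, True) \<in> X \<longleftrightarrow> (e, False) \<notin> X"
    and X2_mem: "e \<in> E - A \<Longrightarrow> e \<in> X2 \<longleftrightarrow> ((e, False) \<in> X \<longleftrightarrow> sgnf e)" for e
    using A X2 by (auto simp: agreeing_edges_def)
  show "mixed_degree (E \<times> UNIV) (cover_ends ends sgnf) (lab \<circ> fst) X (v, False)
      = mixed_degree A ends lab X1 v + mixed_degree (E - A) ends (swap_lab sgnf lab) X2 v"
    unfolding cover agree mixed_degree_eq_sum[OF finite_Diff[OF fin]] lifts_def
    using loopless disagree X2_mem
    by (intro arg_cong2[where f = "(+)"] refl sum.cong lifts_mixed_degree_disagree(1)) auto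
  have "sum (lifts True) (E - A) + mixed_degree (E - A) ends (swap_lab sgnf lab) X2 v
      = degree (E - A) ends v"
    unfolding mixed_degree_eq_sum[OF finite_Diff[OF fin]] degree_eq_sum[OF finite_Diff[OF fin]]
      sum.distrib[symmetric] lifts_def
    using loopless disagree X2_mem
    by (intro sum.cong refl lifts_mixed_degree_disagree(2)) auto
  then show "mixed_degree (E \<times> UNIV) (cover_ends ends sgnf) (lab \<circ> fst) X (v, True)
      + mixed_degree (E - A) ends (swap_lab sgnf lab) X2 v
      = mixed_degree A ends lab X1 v + degree (E - A) ends v"
    unfolding cover agree by simp
qed

lemma balanced_cover_iff:
  fixes ends :: "'e \<Rightarrow> 'v \<times> 'v"
  assumes fin: "finite E" and loopless: "\<forall>e\<in>E. fst (ends e) \<noteq> snd (ends e)"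
    and XE: "X \<subseteq> E \<times> UNIV" and split: "cover_split E sgnf X = (A, X1, X2)"
  shows "balanced_factorientation (V \<times> UNIV) (E \<times> UNIV) (cover_ends ends sgnf) (lab \<circ> fst) X
     \<longleftrightarrow> balanced_factorientation V A ends lab X1
       \<and> balanced_factorientation V (E - A) ends (swap_lab sgnf lab) X2"
proof -
  have subsets: "A \<subseteq> E" "X1 \<subseteq> A" "X2 \<subseteq> E - A"
    using cover_split_subsets[OF split] by auto
  have "(\<forall>b. 2 * mixed_degree (E \<times> UNIV) (cover_ends ends sgnf) (lab \<circ> fst) X (v, b)
             = degree (E \<times> UNIV) (cover_ends ends sgnf) (v, b))
      \<longleftrightarrow> 2 * mixed_degree A ends lab X1 v = degree A ends v
        \<and> 2 * mixed_degree (E - A) ends (swap_lab sgnf lab) X2 v = degree (E - A) ends v" for v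
    using mixed_degree_cover[OF fin loopless split, where lab = lab and v = v]
      degree_cover[OF fin loopless, where sgnf = sgnf and v = v and b = False]
      degree_cover[OF fin loopless, where sgnf = sgnf and v = v and b = True]
      degree_split[OF fin \<open>A \<subseteq> E\<close>, where ends = ends and v = v]
    unfolding all_bool_eq by (intro iffI conjI; elim conjE; linarith)
  then show ?thesis
    using XE subsets unfolding balanced_factorientation_def by auto
qed

lemma finite_balanced_factorientations:
  "finite E \<Longrightarrow> finite {X. balanced_factorientation V E ends lab X}"
  by (rule finite_subset[of _ "Pow E"]) (auto simp: balanced_factorientation_def)

lemma bij_betw_cover_split_balanced:
  fixes ends :: "'e \<Rightarrow> 'v \<times> 'v"
  assumes fin: "finite E" and loopless: "\<forall>e\<in>E. fst (ends e) \<noteq> snd (ends e)"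
  shows "bij_betw (cover_split E sgnf)
     {X. balanced_factorientation (V \<times> UNIV) (E \<times> UNIV) (cover_ends ends sgnf) (lab \<circ> fst) X}
     (SIGMA A:Pow E. {X1. balanced_factorientation V A ends lab X1}
                     \<times> {X2. balanced_factorientation V (E - A) ends (swap_lab sgnf lab) X2})"
    (is "bij_betw _ {X. ?balanced_cover X} ?Sigma")
proof -
  let ?splits = "{(A, X1, X2). A \<subseteq> E \<and> X1 \<subseteq> A \<and> X2 \<subseteq> E - A}"
  have "bij_betw (cover_split E sgnf) {X \<in> Pow (E \<times> UNIV). ?balanced_cover X}
          {t \<in> ?splits. t \<in> ?Sigma}"
  proof (rule bij_betw_Collect[OF bij_betw_cover_split])
    fix X :: "('e \<times> bool) set"
    assume X: "X \<in> Pow (E \<times> UNIV)"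
    obtain A X1 X2 where split: "cover_split E sgnf X = (A, X1, X2)"
      by (metis prod_cases3)
    moreover have "?balanced_cover X \<longleftrightarrow> balanced_factorientation V A ends lab X1
        \<and> balanced_factorientation V (E - A) ends (swap_lab sgnf lab) X2"
      using X split by (simp add: balanced_cover_iff[OF fin loopless])
    ultimately show "cover_split E sgnf X \<in> ?Sigma \<longleftrightarrow> ?balanced_cover X"
      using cover_split_subsets[OF split] by simp
  qed
  moreover have "{X \<in> Pow (E \<times> UNIV). ?balanced_cover X} = {X. ?balanced_cover X}"
    by (auto simp: balanced_factorientation_def)
  moreover have "{t \<in> ?splits. t \<in> ?Sigma} = ?Sigma"
    by (auto simp: balanced_factorientation_def)
  ultimately show ?thesis
    by simp
qed

theorem theorem1p9:
  fixes V :: "'v set" and E :: "'e set" and ends :: "'e \<Rightarrow> 'v \<times> 'v"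
    and sgnf :: "'e \<Rightarrow> bool" and lab :: "'e \<Rightarrow> bool"
  assumes "finite V" and "finite E"
    and "\<forall>e\<in>E. fst (ends e) \<in> V \<and> snd (ends e) \<in> V \<and> fst (ends e) \<noteq> snd (ends e)"
  shows "gcount (V \<times> UNIV) (E \<times> UNIV) (cover_ends ends sgnf) (lab \<circ> fst)
         = (\<Sum>A\<in>Pow E. gcount V A ends lab * gcount V (E - A) ends (swap_lab sgnf lab))"
proof -
  have loopless: "\<forall>e\<in>E. fst (ends e) \<noteq> snd (ends e)"
    using assms(3) by blast
  have "gcount (V \<times> UNIV) (E \<times> UNIV) (cover_ends ends sgnf) (lab \<circ> fst)
      = card (SIGMA A:Pow E. {X1. balanced_factorientation V A ends lab X1}
                \<times> {X2. balanced_factorientation V (E - A) ends (swap_lab sgnf lab) X2})"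
    unfolding gcount_def
    by (rule bij_betw_same_card[OF bij_betw_cover_split_balanced[OF assms(2) loopless]])
  also have "\<dots> = (\<Sum>A\<in>Pow E. card ({X1. balanced_factorientation V A ends lab X1}
                \<times> {X2. balanced_factorientation V (E - A) ends (swap_lab sgnf lab) X2}))"
    using assms(2) by (intro card_SigmaI)
      (auto intro!: finite_balanced_factorientations dest: rev_finite_subset)
  finally show ?thesis
    unfolding gcount_def card_cartesian_product .
qed

end
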